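(* For $x,y\in S^1\cap\mathbb{H}^2$, $$2\rho_{\mathbb{H}^2}(x,y)=\rho_{\mathbb{B}^2}(\operatorname{Re}x,\operatorname{Re}y),$$ where $\operatorname{Re}x,\operatorname{Re}y\in(-1,1)$ are the orthogonal projections of $x,y$ onto the real axis, regarded as points of $\mathbb{B}^2$.
   Context: $\mathbb{H}^2$ is the upper half plane, $\mathbb{B}^2$ the unit disk, $S^1$ the unit circle. $\rho_{\mathbb{H}^2}$ is given by $\cosh\rho_{\mathbb{H}^2}(x,y)=1+\frac{|x-y|^2}{2\operatorname{Im}x\operatorname{Im}y}$ and $\rho_{\mathbb{B}^2}$ by $\sinh\frac{\rho_{\mathbb{B}^2}(x,y)}{2}=\frac{|x-y|}{\sqrt{1-|x|^2}\sqrt{1-|y|^2}}$. *)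

theory Defs
  imports "HOL-Analysis.Analysis"
begin

definition upper_half_plane :: "complex set" where
  "upper_half_plane = {z. Im z > 0}"

definition unit_disk :: "complex set" where
  "unit_disk = {z. cmod z < 1}"

definition unit_circle :: "complex set" where
  "unit_circle = {z. cmod z = 1}"

definition rho_H :: "complex \<Rightarrow> complex \<Rightarrow> real" where
  "rho_H x y = arcosh (1 + (cmod (x - y))\<^sup>2 / (2 * Im x * Im y))"

definition rho_B :: "complex \<Rightarrow> complex \<Rightarrow> real" where
  "rho_B x y = 2 * arsinh (cmod (x - y) / (sqrt (1 - (cmod x)\<^sup>2) * sqrt (1 - (cmod y)\<^sup>2)))"

end

theory Submission
  imports Defs
begin

text \<open>For points \<open>x, y\<close> of the unit circle in the upper half plane one has
  \<open>cosh \<rho>\<^sub>H(x,y) = (1 - Re x Re y) / (Im x Im y)\<close>, while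
  \<open>sinh (\<rho>\<^sub>B(Re x, Re y) / 2) = |Re x - Re y| / (Im x Im y)\<close> since
  \<open>1 - (Re x)\<^sup>2 = (Im x)\<^sup>2\<close>. The Lagrange-type identity
  \<open>(1 - Re x Re y)\<^sup>2 = (Re x - Re y)\<^sup>2 + (Im x Im y)\<^sup>2\<close> says that these two
  quantities satisfy \<open>cosh\<^sup>2 - sinh\<^sup>2 = 1\<close>, so they are the hyperbolic
  cosine and sine of the same nonnegative number.\<close>

lemma Re_Im_square_sum_eq_one:
  assumes "cmod x = 1"
  shows "(Re x)\<^sup>2 + (Im x)\<^sup>2 = 1"
  using cmod_power2[of x] assms by simp

lemma arcosh_sqrt_square_plus_one:
  fixes z :: real
  assumes "z \<ge> 0"
  shows "arcosh (sqrt (z\<^sup>2 + 1)) = arsinh z"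
  using assms by (metis arcosh_cosh_real arsinh_real_pos_iff cosh_arsinh_real
      le_less arsinh_0)

lemma sqrt_one_minus_Re_square:
  assumes "cmod x = 1"
  shows "sqrt (1 - (Re x)\<^sup>2) = \<bar>Im x\<bar>"
proof -
  have "1 - (Re x)\<^sup>2 = (Im x)\<^sup>2"
    using Re_Im_square_sum_eq_one[OF assms] by simp
  then show ?thesis by simp
qed

lemma unit_circle_norm_diff_square:
  assumes "cmod x = 1" and "cmod y = 1"
  shows "(cmod (x - y))\<^sup>2 = 2 - 2 * (Re x * Re y + Im x * Im y)"
proof -
  have "(cmod (x - y))\<^sup>2 = (Re x - Re y)\<^sup>2 + (Im x - Im y)\<^sup>2"
    by (simp add: cmod_power2)
  then show ?thesis
    using assms[THEN Re_Im_square_sum_eq_one] by (simp add: power2_eq_square algebra_simps)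
qed

lemma unit_circle_one_minus_Re_mult_square:
  assumes "cmod x = 1" and "cmod y = 1"
  shows "(1 - Re x * Re y)\<^sup>2 = (Re x - Re y)\<^sup>2 + (Im x * Im y)\<^sup>2"
proof -
  have "(Im x)\<^sup>2 = 1 - (Re x)\<^sup>2" "(Im y)\<^sup>2 = 1 - (Re y)\<^sup>2"
    using assms[THEN Re_Im_square_sum_eq_one] by linarith+
  then have "(Im x * Im y)\<^sup>2 = (1 - (Re x)\<^sup>2) * (1 - (Re y)\<^sup>2)"
    by (simp only: power_mult_distrib)
  then show ?thesis by (simp add: power2_eq_square algebra_simps)
qed

lemma unit_circle_Re_mult_le_one:
  assumes "cmod x = 1" and "cmod y = 1"
  shows "Re x * Re y \<le> 1"
proof -
  have "\<bar>Re x\<bar> \<le> 1" "\<bar>Re y\<bar> \<le> 1"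
    using assms abs_Re_le_cmod by metis+
  then have "\<bar>Re x * Re y\<bar> \<le> 1"
    by (simp add: abs_mult mult_le_one)
  then show ?thesis by linarith
qed

lemma unit_circle_cosh_rho_H:
  assumes "cmod x = 1" and "cmod y = 1" and "Im x * Im y > 0"
  shows "1 + (cmod (x - y))\<^sup>2 / (2 * Im x * Im y)
           = sqrt ((\<bar>Re x - Re y\<bar> / (Im x * Im y))\<^sup>2 + 1)"
proof -
  let ?p = "Im x * Im y"
  have p: "?p \<noteq> 0" using assms(3) by linarith
  have "1 + (cmod (x - y))\<^sup>2 / (2 * Im x * Im y) = (1 - Re x * Re y) / ?p"
    using assms p by (simp add: unit_circle_norm_diff_square field_simps)
  also have "\<dots> = sqrt (((1 - Re x * Re y) / ?p)\<^sup>2)"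
    using assms unit_circle_Re_mult_le_one by simp
  also have "((1 - Re x * Re y) / ?p)\<^sup>2 = (\<bar>Re x - Re y\<bar> / ?p)\<^sup>2 + 1"
    using assms p by (simp add: unit_circle_one_minus_Re_mult_square power_divide
        add_divide_distrib)
  finally show ?thesis .
qed

theorem mainTheorem5:
  fixes x y :: complex
  assumes "x \<in> unit_circle \<inter> upper_half_plane" and "y \<in> unit_circle \<inter> upper_half_plane"
  shows "2 * rho_H x y = rho_B (complex_of_real (Re x)) (complex_of_real (Re y))"
proof -
  have x: "cmod x = 1" "Im x > 0" and y: "cmod y = 1" "Im y > 0"
    using assms by (auto simp: unit_circle_def upper_half_plane_def)
  have "rho_H x y = arcosh (sqrt ((\<bar>Re x - Re y\<bar> / (Im x * Im y))\<^sup>2 + 1))"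
    unfolding rho_H_def using x y by (simp add: unit_circle_cosh_rho_H)
  also have "\<dots> = arsinh (\<bar>Re x - Re y\<bar> / (Im x * Im y))"
    using x y by (simp add: arcosh_sqrt_square_plus_one)
  finally show ?thesis
    unfolding rho_B_def using x y
    by (simp add: sqrt_one_minus_Re_square flip: of_real_diff)
qed

end
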